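(* Let $X$ be a real Banach space with the fixed point property, and let $f:X\to X$ be nonexpansive and real analytic. If $f$ has more than one fixed point, then the set of fixed points of $f$ is unbounded.
   Context: $X$ has the fixed point property if for every nonempty closed, bounded, convex $C\subset X$ and every nonexpansive $g:C\to C$, $g$ has a fixed point in $C$. Nonexpansive: $\|f(x)-f(y)\|\le\|x-y\|$. Real analytic (weak sense): for all $x,y\in X$ and $z^*\in X^*$, the function $t\mapsto z^*(f(x+ty))$ is real analytic on $\mathbb{R}$. *)

theory Defs
  imports "HOL-Analysis.Analysis"
begin

definition nonexpansive_on :: "'a::real_normed_vector set \<Rightarrow> ('a \<Rightarrow> 'a) \<Rightarrow> bool" where
  "nonexpansive_on C g \<longleftrightarrow> (\<forall>x\<in>C. \<forall>y\<in>C. norm (g x - g y) \<le> norm (x - y))"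

definition fixed_point_property :: "'a::real_normed_vector itself \<Rightarrow> bool" where
  "fixed_point_property TYPE('a) \<longleftrightarrow>
     (\<forall>(C::'a set) g. C \<noteq> {} \<and> closed C \<and> bounded C \<and> convex C \<and>
        g ` C \<subseteq> C \<and> nonexpansive_on C g \<longrightarrow> (\<exists>x\<in>C. g x = x))"

definition real_analytic :: "(real \<Rightarrow> real) \<Rightarrow> bool" where
  "real_analytic h \<longleftrightarrow>
     (\<forall>t0. \<exists>r>0. \<exists>a::nat \<Rightarrow> real. \<forall>t. \<bar>t - t0\<bar> < r \<longrightarrow>
        (\<lambda>n. a n * (t - t0) ^ n) sums h t)"

definition weakly_real_analytic :: "('a::real_normed_vector \<Rightarrow> 'a) \<Rightarrow> bool" where
  "weakly_real_analytic f \<longleftrightarrow>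
     (\<forall>x y. \<forall>z::'a \<Rightarrow> real. bounded_linear z \<longrightarrow> real_analytic (\<lambda>t. z (f (x + t *\<^sub>R y))))"

end

theory Submission
  imports Defs "HOL-Complex_Analysis.Cauchy_Integral_Formula"
begin

(* Let p \<noteq> q be fixed points and e = q - p. Call a linear functional u with u \<le> norm and
   u e = norm e norming for e. Nonexpansiveness forces u (f (p + t e)) = u p + t norm e for
   0 \<le> t \<le> 1, and real analyticity of t \<mapsto> u (f (p + t e)) extends this to all t. Comparing
   f w with the far points f (p + t e) of the ray then shows that f maps the closed bounded
   convex set of all w with norm (w - p) \<le> R and R \<le> u (w - p) for every norming u into
   itself; this uses Hahn-Banach for the sublinear functional
   v \<mapsto> inf {norm (v + t e) - t norm e | t \<ge> 0}, which follows from the fact that a minimal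
   sublinear functional is linear. The fixed point property then gives a fixed point at
   distance at least R from p, for every R. *)

definition sublinear :: "('a::real_vector \<Rightarrow> real) \<Rightarrow> bool" where
  "sublinear q \<longleftrightarrow> (\<forall>x y. q (x + y) \<le> q x + q y) \<and> (\<forall>t x. 0 \<le> t \<longrightarrow> q (t *\<^sub>R x) = t * q x)"

lemma sublinear_add: "sublinear q \<Longrightarrow> q (x + y) \<le> q x + q y"
  by (simp add: sublinear_def)

lemma sublinear_scaleR: "sublinear q \<Longrightarrow> 0 \<le> t \<Longrightarrow> q (t *\<^sub>R x) = t * q x"
  by (simp add: sublinear_def)

lemma sublinear_zero: "sublinear q \<Longrightarrow> q 0 = 0"
  using sublinear_scaleR[of q 0 0] by simp

lemma sublinear_uminus_ge: "sublinear q \<Longrightarrow> - q (- x) \<le> q x"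
  using sublinear_add[of q x "- x"] sublinear_zero[of q] by simp

lemma sublinear_norm: "sublinear norm"
  by (simp add: sublinear_def norm_triangle_ineq)

lemma sublinearI:
  assumes add: "\<And>x y. q (x + y) \<le> q x + q y"
    and scale: "\<And>t x. 0 < t \<Longrightarrow> q (t *\<^sub>R x) \<le> t * q x"
    and zero: "q 0 \<le> 0"
  shows "sublinear q"
  unfolding sublinear_def
proof (intro conjI allI impI add)
  fix t :: real and x assume "0 \<le> t"
  show "q (t *\<^sub>R x) = t * q x"
  proof (cases "t = 0")
    case True
    then show ?thesis using zero add[of 0 0] by simp
  next
    case False
    with \<open>0 \<le> t\<close> have "0 < t" by simp
    have "q x = q (inverse t *\<^sub>R (t *\<^sub>R x))"
      using \<open>t \<noteq> 0\<close> by simp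
    also have "\<dots> \<le> inverse t * q (t *\<^sub>R x)"
      using \<open>0 < t\<close> by (intro scale) simp
    finally have "t * q x \<le> q (t *\<^sub>R x)"
      using \<open>0 < t\<close> by (simp add: field_simps)
    with scale[OF \<open>0 < t\<close>, of x] show ?thesis by linarith
  qed
qed

lemma sublinear_imp_linear:
  assumes q: "sublinear q" and odd: "\<And>a. q (- a) \<le> - q a"
  shows "linear q"
proof -
  have uminus: "q (- a) = - q a" for a
    using odd[of a] sublinear_uminus_ge[OF q, of a] by simp
  have add: "q (x + y) = q x + q y" for x y
  proof (rule antisym)
    show "q (x + y) \<le> q x + q y" by (rule sublinear_add[OF q])
    show "q x + q y \<le> q (x + y)"
      using sublinear_add[OF q, of "x + y" "- y"] uminus[of y] by simp
  qed
  have "q (c *\<^sub>R x) = c * q x" for c x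
  proof (cases "0 \<le> c")
    case True
    then show ?thesis by (rule sublinear_scaleR[OF q])
  next
    case False
    have "q (c *\<^sub>R x) = q (- ((- c) *\<^sub>R x))" by simp
    also have "\<dots> = - ((- c) * q x)"
      using False by (simp only: uminus sublinear_scaleR[OF q])
    also have "\<dots> = c * q x" by simp
    finally show ?thesis .
  qed
  with add show ?thesis by (intro linearI) simp_all
qed

definition ray_inf :: "('a::real_vector \<Rightarrow> real) \<Rightarrow> 'a \<Rightarrow> 'a \<Rightarrow> real" where
  "ray_inf q a x = (INF t\<in>{0..}. q (x + t *\<^sub>R a) - t * q a)"

lemma bdd_below_ray_inf:
  assumes "sublinear q"
  shows "bdd_below ((\<lambda>t. q (x + t *\<^sub>R a) - t * q a) ` {0..})"
proof (rule bdd_belowI2)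
  fix t :: real assume "t \<in> {0..}"
  then have "t * q a = q (t *\<^sub>R a)"
    using assms by (simp add: sublinear_scaleR)
  also have "\<dots> \<le> q (x + t *\<^sub>R a) + q (- x)"
    using sublinear_add[OF assms, of "x + t *\<^sub>R a" "- x"] by simp
  finally show "- q (- x) \<le> q (x + t *\<^sub>R a) - t * q a" by simp
qed

lemma ray_inf_le: "sublinear q \<Longrightarrow> 0 \<le> t \<Longrightarrow> ray_inf q a x \<le> q (x + t *\<^sub>R a) - t * q a"
  unfolding ray_inf_def by (rule cINF_lower[OF bdd_below_ray_inf]) auto

lemma ray_inf_greatest:
  "(\<And>t. 0 \<le> t \<Longrightarrow> m \<le> q (x + t *\<^sub>R a) - t * q a) \<Longrightarrow> m \<le> ray_inf q a x"
  unfolding ray_inf_def by (rule cINF_greatest) auto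

lemma ray_inf_le_self: "sublinear q \<Longrightarrow> ray_inf q a \<le> q"
  using ray_inf_le[of q 0 a] by (simp add: le_fun_def)

lemma ray_inf_uminus_le: "sublinear q \<Longrightarrow> ray_inf q a (- a) \<le> - q a"
  using ray_inf_le[of q 1 a "- a"] sublinear_zero[of q] by simp

lemma sublinear_ray_inf:
  assumes q: "sublinear q"
  shows "sublinear (ray_inf q a)"
proof (rule sublinearI)
  fix x y
  have "ray_inf q a (x + y) - (q (y + s *\<^sub>R a) - s * q a) \<le> q (x + t *\<^sub>R a) - t * q a"
    if "0 \<le> t" "0 \<le> s" for s t
  proof -
    have "ray_inf q a (x + y) \<le> q ((x + t *\<^sub>R a) + (y + s *\<^sub>R a)) - (t + s) * q a"
      using ray_inf_le[OF q, of "t + s" a "x + y"] that by (simp add: algebra_simps)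
    also have "\<dots> \<le> q (x + t *\<^sub>R a) + q (y + s *\<^sub>R a) - (t + s) * q a"
      using sublinear_add[OF q] by simp
    finally show ?thesis by (simp add: algebra_simps)
  qed
  then have *: "ray_inf q a (x + y) - (q (y + s *\<^sub>R a) - s * q a) \<le> ray_inf q a x"
    if "0 \<le> s" for s
    using that by (intro ray_inf_greatest)
  have "ray_inf q a (x + y) - ray_inf q a x \<le> ray_inf q a y"
  proof (rule ray_inf_greatest)
    fix s :: real assume "0 \<le> s"
    from *[OF this] show "ray_inf q a (x + y) - ray_inf q a x \<le> q (y + s *\<^sub>R a) - s * q a"
      by linarith
  qed
  then show "ray_inf q a (x + y) \<le> ray_inf q a x + ray_inf q a y" by simp
next
  fix s :: real and x assume "0 < s"
  have "ray_inf q a (s *\<^sub>R x) / s \<le> q (x + t *\<^sub>R a) - t * q a" if "0 \<le> t" for t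
  proof -
    have "ray_inf q a (s *\<^sub>R x) \<le> q (s *\<^sub>R (x + t *\<^sub>R a)) - (s * t) * q a"
      using ray_inf_le[OF q, of "s * t" a "s *\<^sub>R x"] \<open>0 < s\<close> that
      by (simp add: scaleR_add_right)
    also have "\<dots> = s * (q (x + t *\<^sub>R a) - t * q a)"
      using \<open>0 < s\<close> by (simp add: sublinear_scaleR[OF q] right_diff_distrib)
    finally show ?thesis using \<open>0 < s\<close> by (simp add: field_simps)
  qed
  then have "ray_inf q a (s *\<^sub>R x) / s \<le> ray_inf q a x"
    by (rule ray_inf_greatest)
  then show "ray_inf q a (s *\<^sub>R x) \<le> s * ray_inf q a x"
    using \<open>0 < s\<close> by (simp add: field_simps)
next
  show "ray_inf q a 0 \<le> 0"
    using le_funD[OF ray_inf_le_self[OF q, of a], of 0] sublinear_zero[OF q] by simp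
qed

lemma sublinear_INF_chain:
  fixes C :: "('a::real_vector \<Rightarrow> real) set"
  assumes "C \<noteq> {}" and sub: "\<And>q. q \<in> C \<Longrightarrow> sublinear q"
    and chain: "\<And>q q'. q \<in> C \<Longrightarrow> q' \<in> C \<Longrightarrow> q \<le> q' \<or> q' \<le> q"
    and bdd: "\<And>x. bdd_below ((\<lambda>q. q x) ` C)"
  shows "sublinear (\<lambda>x. INF q\<in>C. q x)"
proof -
  define g where "g x = (INF q\<in>C. q x)" for x
  have le: "g x \<le> q x" if "q \<in> C" for q x
    unfolding g_def using that bdd by (intro cINF_lower) auto
  have greatest: "m \<le> g x" if "\<And>q. q \<in> C \<Longrightarrow> m \<le> q x" for m x
    unfolding g_def using \<open>C \<noteq> {}\<close> that by (rule cINF_greatest)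
  have "sublinear g"
  proof (rule sublinearI)
    fix x y
    have "g (x + y) - q' y \<le> q x" if qC: "q \<in> C" "q' \<in> C" for q q'
    proof -
      obtain r where "r \<in> C" "r \<le> q" "r \<le> q'"
        using chain[OF qC] qC by blast
      have "g (x + y) \<le> r x + r y"
        using le[OF \<open>r \<in> C\<close>] sublinear_add[OF sub[OF \<open>r \<in> C\<close>]] by (rule order_trans)
      also have "\<dots> \<le> q x + q' y"
        using \<open>r \<le> q\<close> \<open>r \<le> q'\<close> by (simp add: le_fun_def add_mono)
      finally show ?thesis by simp
    qed
    then have "g (x + y) - q' y \<le> g x" if "q' \<in> C" for q'
      using that by (intro greatest)
    then have "g (x + y) - g x \<le> g y"
      by (intro greatest) (simp only: diff_le_eq le_diff_eq add.commute)
    then show "g (x + y) \<le> g x + g y" by simp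
  next
    fix t :: real and x assume "0 < t"
    have "g (t *\<^sub>R x) / t \<le> q x" if "q \<in> C" for q
      using le[OF that, of "t *\<^sub>R x"] sublinear_scaleR[OF sub[OF that], of t x] \<open>0 < t\<close>
      by (simp add: field_simps)
    then have "g (t *\<^sub>R x) / t \<le> g x" by (rule greatest)
    then show "g (t *\<^sub>R x) \<le> t * g x"
      using \<open>0 < t\<close> by (simp add: field_simps)
  next
    obtain q where "q \<in> C" using \<open>C \<noteq> {}\<close> by blast
    then show "g 0 \<le> 0"
      using le[of q 0] sublinear_zero[OF sub] by fastforce
  qed
  then show ?thesis by (simp add: g_def [abs_def])
qed

text \<open>Zorn's lemma yields a minimal sublinear functional below \<open>Q\<close>; minimality forces
  \<open>ray_inf m a = m\<close> for every \<open>a\<close>, which makes \<open>m\<close> linear.\<close>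
lemma ex_linear_le_sublinear:
  fixes Q :: "'a::real_vector \<Rightarrow> real"
  assumes "sublinear Q"
  shows "\<exists>u. linear u \<and> u \<le> Q"
proof -
  define A where "A = {q. sublinear q \<and> q \<le> Q}"
  have "partial_order_on A (relation_of (\<ge>) A)"
    by (rule partial_order_on_relation_ofI) auto
  moreover have "\<exists>g\<in>A. \<forall>q\<in>C. g \<le> q" if "C \<in> Chains (relation_of (\<ge>) A)" for C
  proof (cases "C = {}")
    case True
    then show ?thesis using assms by (auto simp: A_def)
  next
    case False
    have CA: "C \<subseteq> A" using Chains_relation_of[OF that] .
    have bdd: "bdd_below ((\<lambda>q. q x) ` C)" for x
    proof (rule bdd_belowI2)
      fix q assume "q \<in> C"
      then have "sublinear q" "q (- x) \<le> Q (- x)" using CA by (auto simp: A_def le_fun_def)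
      then show "- Q (- x) \<le> q x" using sublinear_uminus_ge[of q x] by linarith
    qed
    have chain: "q \<le> q' \<or> q' \<le> q" if "q \<in> C" "q' \<in> C" for q q'
      using \<open>C \<in> Chains _\<close> that unfolding Chains_def relation_of_def by blast
    define g where "g = (\<lambda>x. INF q\<in>C. q x)"
    have "sublinear g"
      unfolding g_def using False CA chain bdd by (intro sublinear_INF_chain) (auto simp: A_def)
    moreover have g_le: "g \<le> q" if "q \<in> C" for q
      using that bdd by (auto simp: g_def le_fun_def intro: cINF_lower)
    moreover obtain q where "q \<in> C" using False by blast
    then have "g \<le> Q" using g_le CA by (auto simp: A_def intro: order.trans)
    ultimately show ?thesis by (auto simp: A_def)
  qed
  ultimately obtain m where "m \<in> A" and min: "\<And>q. q \<in> A \<Longrightarrow> q \<le> m \<Longrightarrow> q = m"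
    using predicate_Zorn[of A "(\<ge>)"] by blast
  then have m: "sublinear m" "m \<le> Q" by (auto simp: A_def)
  have "ray_inf m a = m" for a
  proof (rule min)
    show "ray_inf m a \<le> m" by (rule ray_inf_le_self[OF m(1)])
    then show "ray_inf m a \<in> A"
      using sublinear_ray_inf[OF m(1)] order.trans[OF _ m(2)] by (simp add: A_def)
  qed
  then have "linear m"
    using ray_inf_uminus_le[OF m(1)] by (intro sublinear_imp_linear[OF m(1)]) metis
  with m(2) show ?thesis by blast
qed

lemma hahn_banach_sublinear:
  assumes P: "sublinear P"
  shows "\<exists>u. linear u \<and> u \<le> P \<and> u v = P v"
proof -
  obtain u where u: "linear u" "u \<le> ray_inf P v"
    using ex_linear_le_sublinear[OF sublinear_ray_inf[OF P]] by blast
  have "u \<le> P"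
    using u(2) ray_inf_le_self[OF P] by (rule order.trans)
  moreover have "- u v \<le> - P v"
  proof -
    have "- u v = u (- v)" using linear_neg[OF u(1)] by simp
    also have "\<dots> \<le> ray_inf P v (- v)" using u(2) by (simp add: le_fun_def)
    also have "\<dots> \<le> - P v" by (rule ray_inf_uminus_le[OF P])
    finally show ?thesis .
  qed
  ultimately have "u v = P v" by (simp add: le_fun_def antisym)
  with u(1) \<open>u \<le> P\<close> show ?thesis by blast
qed

lemma real_analytic_isCont:
  assumes "real_analytic g"
  shows "isCont g t"
proof -
  obtain r a where "r > 0" and sums: "\<And>s. \<bar>s - t\<bar> < r \<Longrightarrow> (\<lambda>n. a n * (s - t) ^ n) sums g s"
    using assms unfolding real_analytic_def by blast
  define G where "G h = (\<Sum>n. a n * h ^ n)" for h :: real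
  have "summable (\<lambda>n. a n * (r / 2) ^ n)"
    using sums[of "t + r / 2"] \<open>r > 0\<close> by (auto simp: sums_iff)
  then have "isCont G ((\<lambda>s. s - t) t)"
    unfolding G_def by (simp, rule isCont_powser) (use \<open>r > 0\<close> in auto)
  then have "isCont (\<lambda>s. G (s - t)) t"
    by (rule isCont_o2[rotated]) (intro continuous_intros)
  moreover have "\<forall>\<^sub>F s in nhds t. G (s - t) = g s"
    unfolding eventually_nhds_metric using \<open>r > 0\<close> sums
    by (auto intro!: exI[of _ r] simp: dist_real_def G_def sums_iff)
  ultimately show ?thesis by (simp add: isCont_cong)
qed

lemma real_analytic_diff:
  assumes "real_analytic g" and "real_analytic h"
  shows "real_analytic (\<lambda>t. g t - h t)"
  unfolding real_analytic_def
proof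
  fix t0
  obtain r a where "r > 0" and g: "\<And>t. \<bar>t - t0\<bar> < r \<Longrightarrow> (\<lambda>n. a n * (t - t0) ^ n) sums g t"
    using assms(1) unfolding real_analytic_def by blast
  obtain r' b where "r' > 0" and h: "\<And>t. \<bar>t - t0\<bar> < r' \<Longrightarrow> (\<lambda>n. b n * (t - t0) ^ n) sums h t"
    using assms(2) unfolding real_analytic_def by blast
  have "(\<lambda>n. (a n - b n) * (t - t0) ^ n) sums (g t - h t)" if "\<bar>t - t0\<bar> < min r r'" for t
    using sums_diff[OF g h] that by (simp add: left_diff_distrib)
  with \<open>r > 0\<close> \<open>r' > 0\<close>
  show "\<exists>r>0. \<exists>c. \<forall>t. \<bar>t - t0\<bar> < r \<longrightarrow> (\<lambda>n. c n * (t - t0) ^ n) sums (g t - h t)"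
    by (intro exI[of _ "min r r'"] conjI exI[of _ "\<lambda>n. a n - b n"]) auto
qed

lemma real_analytic_affine: "real_analytic (\<lambda>t. A + B * t)"
  unfolding real_analytic_def
proof
  fix t0
  define c where "c n = (if n = 0 then A + B * t0 else if n = 1 then B else 0)" for n :: nat
  have "(\<lambda>n. c n * (t - t0) ^ n) sums (A + B * t)" for t
  proof -
    have "(\<lambda>n. c n * (t - t0) ^ n) sums (\<Sum>n\<in>{0, 1}. c n * (t - t0) ^ n)"
      by (rule sums_finite) (auto simp: c_def)
    also have "(\<Sum>n\<in>{0, 1}. c n * (t - t0) ^ n) = A + B * t"
      by (simp add: c_def algebra_simps)
    finally show ?thesis .
  qed
  then show "\<exists>r>0. \<exists>c. \<forall>t. \<bar>t - t0\<bar> < r \<longrightarrow> (\<lambda>n. c n * (t - t0) ^ n) sums (A + B * t)"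
    by (intro exI[of _ 1] conjI exI[of _ c]) auto
qed

lemma real_analytic_zero_nhds_or_isolated:
  assumes "real_analytic g"
  shows "(\<forall>\<^sub>F s in nhds t. g s = 0) \<or> (\<forall>\<^sub>F s in at t. g s \<noteq> 0)"
proof -
  obtain r a where "r > 0" and sums: "\<And>s. \<bar>s - t\<bar> < r \<Longrightarrow> (\<lambda>n. a n * (s - t) ^ n) sums g s"
    using assms unfolding real_analytic_def by blast
  have "(\<lambda>n. a n * 0 ^ n) sums g t" using sums[of t] \<open>r > 0\<close> by simp
  then have "g t = a 0" by (rule sums_unique2[OF _ powser_sums_zero])
  consider "\<forall>n. a n = 0" | "a 0 \<noteq> 0" | m where "0 < m" "a m \<noteq> 0" "a 0 = 0"
    using neq0_conv by blast
  then show ?thesis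
  proof cases
    case 1
    then have "g s = 0" if "\<bar>s - t\<bar> < r" for s
      using sums[OF that] sums_unique2[OF sums_zero] by simp
    then have "\<forall>\<^sub>F s in nhds t. g s = 0"
      unfolding eventually_nhds_metric using \<open>r > 0\<close>
      by (intro exI[of _ r]) (simp add: dist_real_def)
    then show ?thesis ..
  next
    case 2
    then have "\<forall>\<^sub>F s in at t. g s \<noteq> 0"
      using real_analytic_isCont[OF assms, of t] \<open>g t = a 0\<close>
      unfolding isCont_def by (intro tendsto_imp_eventually_ne) auto
    then show ?thesis ..
  next
    case 3
    have sums': "\<And>s. norm (s - t) < r \<Longrightarrow> (\<lambda>n. a n * (s - t) ^ n) sums g s"
      using sums by simp
    have "g t = 0" using \<open>g t = a 0\<close> 3 by simp
    obtain d where "0 < d" and "\<And>s. s \<in> cball t d - {t} \<Longrightarrow> g s \<noteq> 0"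
      using powser_0_nonzero[OF \<open>r > 0\<close> sums' \<open>g t = 0\<close> \<open>a m \<noteq> 0\<close> \<open>0 < m\<close>] by blast
    then have "\<forall>\<^sub>F s in at t. g s \<noteq> 0"
      unfolding eventually_at using \<open>0 < d\<close>
      by (intro exI[of _ d]) (simp add: dist_commute)
    then show ?thesis ..
  qed
qed

lemma open_if_eventually_in_nhds:
  fixes A :: "'a::topological_space set"
  assumes "\<And>x. x \<in> A \<Longrightarrow> \<forall>\<^sub>F y in nhds x. y \<in> A"
  shows "open A"
proof (rule Topological_Spaces.openI)
  fix x assume "x \<in> A"
  from assms[OF this] obtain T where "open T" "x \<in> T" "\<forall>y\<in>T. y \<in> A"
    unfolding eventually_nhds by blast
  then show "\<exists>T. open T \<and> x \<in> T \<and> T \<subseteq> A" by blast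
qed

text \<open>Identity theorem: the points near which \<open>g\<close> vanishes form a nonempty clopen subset
  of \<open>\<real>\<close>.\<close>
lemma real_analytic_eq_0:
  assumes g: "real_analytic g" and "open S" "S \<noteq> {}" and zero: "\<And>s. s \<in> S \<Longrightarrow> g s = 0"
  shows "g t = 0"
proof -
  define Z where "Z = {t. \<forall>\<^sub>F s in nhds t. g s = 0}"
  have zero_Z: "g s = 0" if "s \<in> Z" for s
  proof -
    from that have "\<forall>\<^sub>F s' in nhds s. g s' = 0" by (simp add: Z_def)
    then show ?thesis by (rule eventually_nhds_x_imp_x)
  qed
  have "S \<subseteq> Z"
  proof
    fix s assume "s \<in> S"
    with \<open>open S\<close> have "\<forall>\<^sub>F s' in nhds s. s' \<in> S" by (rule eventually_nhds_in_open)
    then have "\<forall>\<^sub>F s' in nhds s. g s' = 0" by eventually_elim (rule zero)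
    then show "s \<in> Z" by (simp add: Z_def)
  qed
  have "open Z"
    by (rule open_if_eventually_in_nhds) (simp add: Z_def eventually_eventually)
  moreover have "open (- Z)"
  proof (rule open_if_eventually_in_nhds)
    fix x assume "x \<in> - Z"
    then have "\<forall>\<^sub>F s in at x. g s \<noteq> 0"
      using real_analytic_zero_nhds_or_isolated[OF g, of x] by (simp add: Z_def)
    then have "\<forall>\<^sub>F s in at x. s \<in> - Z"
      by eventually_elim (use zero_Z in blast)
    with \<open>x \<in> - Z\<close> show "\<forall>\<^sub>F s in nhds x. s \<in> - Z"
      by (simp add: eventually_nhds_conv_at)
  qed
  ultimately have "Z = {} \<or> Z = UNIV"
    using clopen[of Z] by (simp add: closed_def)
  with \<open>S \<subseteq> Z\<close> \<open>S \<noteq> {}\<close> have "Z = UNIV" by blast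
  then show ?thesis using zero_Z by blast
qed

lemma nonexpansive_onD:
  "nonexpansive_on C g \<Longrightarrow> x \<in> C \<Longrightarrow> y \<in> C \<Longrightarrow> norm (g x - g y) \<le> norm (x - y)"
  by (simp add: nonexpansive_on_def)

lemma nonexpansive_on_subset:
  "nonexpansive_on C g \<Longrightarrow> D \<subseteq> C \<Longrightarrow> nonexpansive_on D g"
  by (auto simp: nonexpansive_on_def)

lemma fixed_point_propertyD:
  fixes C :: "'a::real_normed_vector set"
  assumes "fixed_point_property TYPE('a)"
    and "C \<noteq> {}" "closed C" "bounded C" "convex C" "g ` C \<subseteq> C" "nonexpansive_on C g"
  shows "\<exists>x\<in>C. g x = x"
proof -
  have "\<forall>(C::'a set) g. C \<noteq> {} \<and> closed C \<and> bounded C \<and> convex C \<and>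
      g ` C \<subseteq> C \<and> nonexpansive_on C g \<longrightarrow> (\<exists>x\<in>C. g x = x)"
    using assms(1) by (simp only: fixed_point_property_def)
  from this[rule_format, of C g] assms(2-) show ?thesis by simp
qed

definition norming_functionals :: "'a::real_normed_vector \<Rightarrow> ('a \<Rightarrow> real) set" where
  "norming_functionals e = {u. linear u \<and> u \<le> norm \<and> u e = norm e}"

lemma norming_functional_le_norm: "u \<in> norming_functionals e \<Longrightarrow> u x \<le> norm x"
  by (simp add: norming_functionals_def le_fun_def)

lemma norming_functional_bounded_linear:
  assumes "u \<in> norming_functionals e"
  shows "bounded_linear u"
proof -
  have "linear u" using assms by (simp add: norming_functionals_def)
  moreover have "norm (u x) \<le> norm x * 1" for x
    using norming_functional_le_norm[OF assms, of x] norming_functional_le_norm[OF assms, of "- x"]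
      linear_neg[OF \<open>linear u\<close>, of x]
    by auto
  ultimately show ?thesis
    by (intro bounded_linear_intro[of _ 1]) (simp_all add: linear_add linear_scale)
qed

lemma ex_norming_functional_ge_ray_inf:
  fixes e :: "'a::real_normed_vector"
  shows "\<exists>u\<in>norming_functionals e. ray_inf norm e v \<le> u v"
proof -
  obtain u where "linear u" and u_le: "u \<le> ray_inf norm e" and u_v: "u v = ray_inf norm e v"
    using hahn_banach_sublinear[OF sublinear_ray_inf[OF sublinear_norm]] by blast
  have "u \<le> norm"
    using u_le ray_inf_le_self[OF sublinear_norm] by (rule order.trans)
  moreover have "u e = norm e"
  proof (rule antisym)
    show "u e \<le> norm e" using \<open>u \<le> norm\<close> by (simp add: le_fun_def)
    have "- u e = u (- e)" using linear_neg[OF \<open>linear u\<close>] by simp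
    also have "\<dots> \<le> ray_inf norm e (- e)" using u_le by (simp add: le_fun_def)
    also have "\<dots> \<le> - norm e" by (rule ray_inf_uminus_le[OF sublinear_norm])
    finally show "norm e \<le> u e" by simp
  qed
  ultimately show ?thesis
    using \<open>linear u\<close> u_v by (auto simp: norming_functionals_def)
qed

lemma norming_functional_along_segment:
  assumes f: "nonexpansive_on UNIV f" and "f p = p" "f q = q"
    and u: "u \<in> norming_functionals (q - p)" and "0 \<le> t" "t \<le> 1"
  shows "u (f (p + t *\<^sub>R (q - p))) = u p + t * norm (q - p)"
proof -
  define x where "x = p + t *\<^sub>R (q - p)"
  have "linear u" using u by (simp add: norming_functionals_def)
  have "u (f x) - u p = u (f x - f p)"
    using \<open>f p = p\<close> linear_diff[OF \<open>linear u\<close>] by simp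
  also have "\<dots> \<le> norm (f x - f p)" by (rule norming_functional_le_norm[OF u])
  also have "\<dots> \<le> norm (x - p)" by (rule nonexpansive_onD[OF f]) simp_all
  also have "\<dots> = t * norm (q - p)" using \<open>0 \<le> t\<close> by (simp add: x_def)
  finally have upper: "u (f x) \<le> u p + t * norm (q - p)" by simp
  have "u q - u (f x) = u (f q - f x)"
    using \<open>f q = q\<close> linear_diff[OF \<open>linear u\<close>] by simp
  also have "\<dots> \<le> norm (f q - f x)" by (rule norming_functional_le_norm[OF u])
  also have "\<dots> \<le> norm (q - x)" by (rule nonexpansive_onD[OF f]) simp_all
  also have "q - x = (1 - t) *\<^sub>R (q - p)" by (simp add: x_def algebra_simps)
  also have "norm \<dots> = (1 - t) * norm (q - p)" using \<open>t \<le> 1\<close> by simp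
  finally have lower: "u q - (1 - t) * norm (q - p) \<le> u (f x)" by simp
  have "u q = u p + norm (q - p)"
    using u linear_diff[OF \<open>linear u\<close>, of q p] by (simp add: norming_functionals_def)
  then have "u q - (1 - t) * norm (q - p) = u p + t * norm (q - p)"
    by (simp add: algebra_simps)
  with upper lower show ?thesis unfolding x_def by linarith
qed

text \<open>Along the line through \<open>p\<close> and \<open>q\<close>, \<open>u \<circ> f\<close> is real analytic and affine on the
  segment, hence affine everywhere.\<close>
lemma norming_functional_along_line:
  assumes "nonexpansive_on UNIV f" and "weakly_real_analytic f" and "f p = p" "f q = q"
    and u: "u \<in> norming_functionals (q - p)"
  shows "u (f (p + t *\<^sub>R (q - p))) = u p + t * norm (q - p)"
proof -
  define g where "g = (\<lambda>t. u (f (p + t *\<^sub>R (q - p))) - (u p + norm (q - p) * t))"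
  have "real_analytic (\<lambda>t. u (f (p + t *\<^sub>R (q - p))))"
    using \<open>weakly_real_analytic f\<close> norming_functional_bounded_linear[OF u]
    unfolding weakly_real_analytic_def by blast
  then have "real_analytic g"
    unfolding g_def by (intro real_analytic_diff real_analytic_affine)
  moreover have "g s = 0" if "s \<in> {0<..<1}" for s
    using norming_functional_along_segment[OF assms(1,3,4) u, of s] that by (simp add: g_def)
  ultimately have "g t = 0"
    using real_analytic_eq_0[of g "{0<..<1}"] by simp
  then show ?thesis by (simp add: g_def mult.commute)
qed

lemma norming_functional_image_le_ray_inf:
  assumes f: "nonexpansive_on UNIV f"
    and line: "\<And>t. 0 \<le> t \<Longrightarrow> u (f (p + t *\<^sub>R e)) = u p + t * norm e"
    and u: "u \<in> norming_functionals e"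
  shows "u (p - f w) \<le> ray_inf norm e (p - w)"
proof (rule ray_inf_greatest)
  fix t :: real assume "0 \<le> t"
  have "linear u" using u by (simp add: norming_functionals_def)
  have "u p + t * norm e - u (f w) = u (f (p + t *\<^sub>R e) - f w)"
    using line[OF \<open>0 \<le> t\<close>] linear_diff[OF \<open>linear u\<close>] by simp
  also have "\<dots> \<le> norm (f (p + t *\<^sub>R e) - f w)" by (rule norming_functional_le_norm[OF u])
  also have "\<dots> \<le> norm (p + t *\<^sub>R e - w)" by (rule nonexpansive_onD[OF f]) simp_all
  also have "p + t *\<^sub>R e - w = p - w + t *\<^sub>R e" by simp
  finally show "u (p - f w) \<le> norm (p - w + t *\<^sub>R e) - t * norm e"
    using linear_diff[OF \<open>linear u\<close>, of p "f w"] by simp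
qed

definition norming_cap :: "'a::real_normed_vector \<Rightarrow> 'a \<Rightarrow> real \<Rightarrow> 'a set" where
  "norming_cap p e R = cball p R \<inter> (\<Inter>u\<in>norming_functionals e. {w. R \<le> u (w - p)})"

lemma linear_halfspace_eq_vimage:
  fixes u :: "'a::real_vector \<Rightarrow> real"
  shows "linear u \<Longrightarrow> {w. R \<le> u (w - p)} = u -` {R + u p..}"
  by (auto simp: linear_diff algebra_simps)

lemma closed_norming_cap: "closed (norming_cap p e R)"
  unfolding norming_cap_def
proof (intro closed_Int closed_cball closed_INT ballI)
  fix u assume "u \<in> norming_functionals e"
  then have "bounded_linear u" by (rule norming_functional_bounded_linear)
  then show "closed {w. R \<le> u (w - p)}"
    by (simp add: linear_halfspace_eq_vimage bounded_linear.linear continuous_closed_vimage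
        linear_continuous_at)
qed

lemma convex_norming_cap: "convex (norming_cap p e R)"
  unfolding norming_cap_def
proof (intro convex_Int convex_cball convex_INT)
  fix u assume "u \<in> norming_functionals e"
  then have "linear u" by (simp add: norming_functionals_def)
  then show "convex {w. R \<le> u (w - p)}"
    by (simp add: linear_halfspace_eq_vimage convex_linear_vimage)
qed

lemma bounded_norming_cap: "bounded (norming_cap p e R)"
  unfolding norming_cap_def by (intro bounded_Int) simp

lemma norming_cap_nonempty:
  assumes "e \<noteq> 0" and "0 \<le> R"
  shows "p + (R / norm e) *\<^sub>R e \<in> norming_cap p e R"
  unfolding norming_cap_def
proof (intro IntI INT_I CollectI)
  show "p + (R / norm e) *\<^sub>R e \<in> cball p R"
    using assms by (simp add: dist_norm)
  fix u assume "u \<in> norming_functionals e"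
  then show "R \<le> u (p + (R / norm e) *\<^sub>R e - p)"
    using \<open>e \<noteq> 0\<close> by (simp add: norming_functionals_def linear_scale)
qed

lemma norming_cap_norm_ge:
  assumes "w \<in> norming_cap p e R"
  shows "R \<le> norm (w - p)"
proof -
  obtain u where u: "u \<in> norming_functionals e"
    using ex_norming_functional_ge_ray_inf by blast
  with assms have "R \<le> u (w - p)" by (simp add: norming_cap_def)
  also have "\<dots> \<le> norm (w - p)" by (rule norming_functional_le_norm[OF u])
  finally show ?thesis .
qed

lemma norming_cap_invariant:
  assumes f: "nonexpansive_on UNIV f" and "f p = p"
    and line: "\<And>u t. u \<in> norming_functionals e \<Longrightarrow> 0 \<le> t \<Longrightarrow>
      u (f (p + t *\<^sub>R e)) = u p + t * norm e"
  shows "f ` norming_cap p e R \<subseteq> norming_cap p e R"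
proof safe
  fix w assume w: "w \<in> norming_cap p e R"
  have "norm (f w - p) \<le> norm (w - p)"
    using nonexpansive_onD[OF f, of w p] \<open>f p = p\<close> by simp
  with w have "f w \<in> cball p R" by (simp add: norming_cap_def dist_norm norm_minus_commute)
  moreover have "R \<le> u (f w - p)" if u: "u \<in> norming_functionals e" for u
  proof -
    obtain u' where u': "u' \<in> norming_functionals e" "ray_inf norm e (p - w) \<le> u' (p - w)"
      using ex_norming_functional_ge_ray_inf by blast
    have "u (p - f w) \<le> ray_inf norm e (p - w)"
      by (rule norming_functional_image_le_ray_inf[OF f line[OF u] u])
    also have "\<dots> \<le> u' (p - w)" by (rule u'(2))
    also have "\<dots> = - u' (w - p)"
      using u'(1) linear_neg[of u' "w - p"] by (simp add: norming_functionals_def)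
    also have "\<dots> \<le> - R" using w u'(1) by (simp add: norming_cap_def)
    finally show ?thesis
      using u linear_neg[of u "f w - p"] by (simp add: norming_functionals_def)
  qed
  ultimately show "f w \<in> norming_cap p e R" by (simp add: norming_cap_def)
qed

theorem theorem5p3:
  fixes f :: "'a::banach \<Rightarrow> 'a"
  assumes "fixed_point_property TYPE('a)"
    and "nonexpansive_on UNIV f"
    and "weakly_real_analytic f"
    and "\<exists>p q. p \<noteq> q \<and> f p = p \<and> f q = q"
  shows "\<not> bounded {x. f x = x}"
proof
  assume "bounded {x. f x = x}"
  obtain p q where "p \<noteq> q" "f p = p" "f q = q" using assms(4) by blast
  obtain B where B: "\<And>x. f x = x \<Longrightarrow> dist p x \<le> B"
    using \<open>bounded _\<close> unfolding bounded_any_center[of _ p] by blast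
  define K where "K = norming_cap p (q - p) (B + 1)"
  have "K \<noteq> {}"
    using norming_cap_nonempty[of "q - p" "B + 1" p] \<open>p \<noteq> q\<close> B[OF \<open>f p = p\<close>]
    unfolding K_def by force
  moreover have "f ` K \<subseteq> K"
    unfolding K_def using assms(2) \<open>f p = p\<close>
      norming_functional_along_line[OF assms(2,3) \<open>f p = p\<close> \<open>f q = q\<close>]
    by (rule norming_cap_invariant)
  moreover have "nonexpansive_on K f"
    using assms(2) by (rule nonexpansive_on_subset) simp
  moreover have "closed K" "bounded K" "convex K"
    unfolding K_def by (rule closed_norming_cap bounded_norming_cap convex_norming_cap)+
  ultimately obtain w where "w \<in> K" "f w = w"
    using fixed_point_propertyD[OF assms(1)] by blast
  have "B + 1 \<le> norm (w - p)"
    using \<open>w \<in> K\<close> unfolding K_def by (rule norming_cap_norm_ge)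
  moreover have "norm (w - p) \<le> B"
    using B[OF \<open>f w = w\<close>] by (simp add: dist_norm norm_minus_commute)
  ultimately show False by simp
qed

end
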